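(* Let $C$ be a nonzero $[n,k]_q$-linear code. If there exists a codeword $\mathbf{c}\in C$ such that $w_1(\mathbf{c})=d_1(C)$ and $\chi_1(\mathbf{c})$ is a successive subset of $\mathbb{Z}_n$, then $d_b(C)=\min\{d_1(C)+b-1,\,n\}$ for every $1\le b\le n$.
   Context: Index set: $\mathbb{Z}_n=\{1,2,\dots,n\}$ with indices taken cyclically modulo $n$ (so $n\equiv 0$ and $n+1\equiv 1$). For $\mathbf{x}=(x_1,\dots,x_n)\in\mathbb{F}_q^n$ and $1\le b\le n$, the $b$-symbol support is $\chi_b(\mathbf{x})=\{i\in\mathbb{Z}_n : (x_i,x_{i+1},\dots,x_{i+b-1})\ne \mathbf{0}\}$ (indices mod $n$), the $b$-symbol weight is $w_b(\mathbf{x})=|\chi_b(\mathbf{x})|$ ($w_1$ is the Hamming weight), and for a linear code $C$, $d_b(C)=\min_{\mathbf{0}\ne \mathbf{c}\in C} w_b(\mathbf{c})$. For $J\subseteq\mathbb{Z}_n$, a hole of $J$ of size $h\ge1$ is a set $H=\{a+1,\dots,a+h\}\subseteq \mathbb{Z}_n\setminus J$ (indices mod $n$) with $a\in J$ and $a+h+1\in J$; $\mathbb{H}(J)$ denotes the set of all holes of $J$. $J$ is a successive subset of $\mathbb{Z}_n$ if $|\mathbb{H}(J)|\le 1$. *)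

theory Defs
  imports Main
begin

text \<open>Coordinates are indexed 0-based: the index set Z_n is {0..<n}, indices taken mod n.
  A vector of F_q^n is a function nat => 'a vanishing outside {0..<n}.\<close>

definition vec_space :: "nat \<Rightarrow> (nat \<Rightarrow> 'a::zero) set" where
  "vec_space n = {x. \<forall>i\<ge>n. x i = 0}"

definition linear_code :: "nat \<Rightarrow> (nat \<Rightarrow> 'a::field) set \<Rightarrow> bool" where
  "linear_code n C \<longleftrightarrow> C \<subseteq> vec_space n \<and> (\<lambda>i. 0) \<in> C \<and>
     (\<forall>x\<in>C. \<forall>y\<in>C. (\<lambda>i. x i + y i) \<in> C) \<and> (\<forall>a. \<forall>x\<in>C. (\<lambda>i. a * x i) \<in> C)"

definition bsupp :: "nat \<Rightarrow> nat \<Rightarrow> (nat \<Rightarrow> 'a::zero) \<Rightarrow> nat set" where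
  "bsupp n b x = {i. i < n \<and> (\<exists>j<b. x ((i + j) mod n) \<noteq> 0)}"

definition bweight :: "nat \<Rightarrow> nat \<Rightarrow> (nat \<Rightarrow> 'a::zero) \<Rightarrow> nat" where
  "bweight n b x = card (bsupp n b x)"

definition bdist :: "nat \<Rightarrow> nat \<Rightarrow> (nat \<Rightarrow> 'a::zero) set \<Rightarrow> nat" where
  "bdist n b C = Min {bweight n b c | c. c \<in> C \<and> c \<noteq> (\<lambda>i. 0)}"

definition holes :: "nat \<Rightarrow> nat set \<Rightarrow> nat set set" where
  "holes n J = {H. \<exists>a h. 1 \<le> h \<and> a \<in> J \<and>
       H = {(a + t) mod n | t. 1 \<le> t \<and> t \<le> h} \<and> H \<inter> J = {} \<and> (a + h + 1) mod n \<in> J}"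

definition successive :: "nat \<Rightarrow> nat set \<Rightarrow> bool" where
  "successive n J \<longleftrightarrow> card (holes n J) \<le> 1"

end

theory Submission
  imports Defs
begin

text \<open>Passing from b-symbol to (b+1)-symbol support adds exactly the positions i \<notin> S with
  i + 1 \<in> S, where S is the b-symbol support. So the weight grows by one per step as long as S
  is a proper subset, and the set of such positions never grows in size. A successive support
  has at most one such position (the end of its single hole), hence for a minimum weight
  codeword with successive support the weight grows by exactly one per step until it reaches n,
  while no nonzero codeword can grow slower.\<close>

definition entry_boundary :: "nat \<Rightarrow> nat set \<Rightarrow> nat set" where
  "entry_boundary n S = {i. i < n \<and> i \<notin> S \<and> (i + 1) mod n \<in> S}"

lemma finite_entry_boundary [simp]: "finite (entry_boundary n S)"
  by (rule finite_subset[of _ "{..<n}"]) (auto simp: entry_boundary_def)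

lemma bsupp_subset: "bsupp n b x \<subseteq> {..<n}"
  by (auto simp: bsupp_def)

lemma finite_bsupp [simp]: "finite (bsupp n b x)"
  by (rule finite_subset[OF bsupp_subset]) simp

lemma bweight_le: "bweight n b x \<le> n"
  unfolding bweight_def using card_mono[OF _ bsupp_subset] by fastforce

lemma bsupp_mono: "b \<le> b' \<Longrightarrow> bsupp n b x \<subseteq> bsupp n b' x"
  by (auto simp: bsupp_def) (use less_le_trans in blast)

lemma bsupp_Suc:
  assumes "1 \<le> b"
  shows "bsupp n (Suc b) x = bsupp n b x \<union> entry_boundary n (bsupp n b x)"
proof -
  have shift: "(Suc i mod n + j) mod n = Suc (i + j) mod n" for i j :: nat
    by (simp add: mod_add_left_eq)
  have split: "(\<exists>j<Suc b. P j) \<longleftrightarrow> (\<exists>j<b. P j) \<or> (\<exists>j<b. P (Suc j))" for P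
  proof
    assume "\<exists>j<Suc b. P j"
    then obtain j where "j < Suc b" "P j" by blast
    then show "(\<exists>j<b. P j) \<or> (\<exists>j<b. P (Suc j))" using assms by (cases j) auto
  qed (meson less_SucI Suc_mono)
  have "i \<in> bsupp n (Suc b) x \<longleftrightarrow> i \<in> bsupp n b x \<or> (i < n \<and> (i + 1) mod n \<in> bsupp n b x)"
    for i
    unfolding bsupp_def split by (auto simp: shift)
  then show ?thesis
    by (auto simp: entry_boundary_def bsupp_def)
qed

lemma entry_boundary_empty_imp_full:
  assumes "S \<subseteq> {..<n}" "S \<noteq> {}" "entry_boundary n S = {}"
  shows "S = {..<n}"
proof -
  have closed: "i \<in> S" if "i < n" "(i + 1) mod n \<in> S" for i
    using assms(3) that unfolding entry_boundary_def by blast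
  have below: "i \<in> S" if "m \<in> S" "i \<le> m" for i m
    using that(2,1)
  proof (induction i rule: inc_induct)
    case (step i)
    then show ?case using closed[of i] assms(1) by (auto simp: subset_iff)
  qed
  obtain s where "s \<in> S" using assms(2) by blast
  then have "0 \<in> S" using below by blast
  moreover have "0 < n" using \<open>s \<in> S\<close> assms(1) by auto
  ultimately have "n - 1 \<in> S" using closed[of "n - 1"] by simp
  then have "{..<n} \<subseteq> S" using below by auto
  then show ?thesis using assms(1) by blast
qed

lemma inj_on_Suc_mod: "inj_on (\<lambda>i. (i + 1) mod n) {..<n::nat}"
proof (rule inj_onI)
  have Suc_mod: "(i + 1) mod n = (if i + 1 = n then 0 else i + 1)" if "i < n" for i :: nat
    using that by (cases "i + 1 = n") simp_all
  fix x y assume "x \<in> {..<n}" "y \<in> {..<n}" "(x + 1) mod n = (y + 1) mod n"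
  then show "x = y"
    using Suc_mod[of x] Suc_mod[of y] by (auto split: if_splits)
qed

text \<open>Shifting by one maps the new boundary into the old one.\<close>
lemma card_entry_boundary_step:
  assumes "S \<subseteq> {..<n}"
  shows "card (entry_boundary n (S \<union> entry_boundary n S)) \<le> card (entry_boundary n S)"
proof (rule card_inj_on_le)
  show "inj_on (\<lambda>i. (i + 1) mod n) (entry_boundary n (S \<union> entry_boundary n S))"
    by (rule inj_on_subset[OF inj_on_Suc_mod]) (auto simp: entry_boundary_def)
  show "(\<lambda>i. (i + 1) mod n) ` entry_boundary n (S \<union> entry_boundary n S) \<subseteq> entry_boundary n S"
    using assms by (auto simp: entry_boundary_def)
qed simp

lemma card_bsupp_ge:
  assumes "bsupp n 1 x \<noteq> {}" "1 \<le> b"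
  shows "min (card (bsupp n 1 x) + b - 1) n \<le> card (bsupp n b x)"
  using assms(2)
proof (induction b rule: dec_induct)
  case (step b)
  let ?S = "bsupp n b x"
  show ?case
  proof (cases "?S = {..<n}")
    case True
    then have "bsupp n (Suc b) x = {..<n}"
      using bsupp_mono[of b "Suc b" n x] bsupp_subset[of n "Suc b" x] by auto
    then show ?thesis by simp
  next
    case False
    have "?S \<noteq> {}" using bsupp_mono[OF step(1)] assms(1) by blast
    then have "entry_boundary n ?S \<noteq> {}"
      using False entry_boundary_empty_imp_full[OF bsupp_subset] by blast
    then have "1 \<le> card (entry_boundary n ?S)"
      by (simp add: Suc_le_eq card_gt_0_iff)
    moreover have "card (bsupp n (Suc b) x) = card ?S + card (entry_boundary n ?S)"
      unfolding bsupp_Suc[OF step(1)]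
      by (rule card_Un_disjoint) (auto simp: entry_boundary_def)
    ultimately show ?thesis using step(3) by linarith
  qed
qed simp

lemma card_entry_boundary_bsupp_le:
  assumes "1 \<le> b"
  shows "card (entry_boundary n (bsupp n b x)) \<le> card (entry_boundary n (bsupp n 1 x))"
  using assms
proof (induction b rule: dec_induct)
  case (step b)
  then show ?case
    using card_entry_boundary_step[OF bsupp_subset, of n b x] by (simp add: bsupp_Suc)
qed simp

lemma card_bsupp_le:
  assumes "1 \<le> b"
  shows "card (bsupp n b x) \<le> card (bsupp n 1 x) + (b - 1) * card (entry_boundary n (bsupp n 1 x))"
  using assms
proof (induction b rule: dec_induct)
  case (step b)
  let ?e = "card (entry_boundary n (bsupp n 1 x))"
  have "card (bsupp n (Suc b) x) \<le> card (bsupp n b x) + card (entry_boundary n (bsupp n b x))"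
    unfolding bsupp_Suc[OF step(1)] by (rule card_Un_le)
  moreover have "(Suc b - 1) * ?e = (b - 1) * ?e + ?e"
    using step(1) by (cases b) auto
  ultimately show ?case
    using step(3) card_entry_boundary_bsupp_le[OF step(1), of n x] by linarith
qed simp

text \<open>The hole ending at a boundary point i starts right after the last element of J met
  when walking backwards from i.\<close>
lemma hole_ending_at:
  assumes i: "i \<in> entry_boundary n J"
  shows "\<exists>H\<in>holes n J. i \<in> H \<and> entry_boundary n J \<inter> H \<subseteq> {i}"
proof -
  from i have i_lt: "i < n" and i_notin: "i \<notin> J" and Suc_i: "(i + 1) mod n \<in> J"
    by (auto simp: entry_boundary_def)
  then have "2 \<le> n" by (cases "n = 1") auto
  define K where "K = {k. 1 \<le> k \<and> k \<le> n \<and> (i + n - k) mod n \<in> J}"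
  have "i + n - (n - 1) = i + 1" using \<open>2 \<le> n\<close> by simp
  then have "n - 1 \<in> K" using \<open>2 \<le> n\<close> Suc_i by (simp add: K_def)
  define m where "m = (LEAST k. k \<in> K)"
  have "m \<in> K" unfolding m_def by (rule LeastI) fact
  then have m: "1 \<le> m" "m \<le> n" "(i + n - m) mod n \<in> J" by (auto simp: K_def)
  have m_min: "k \<notin> K" if "k < m" for k
    using that unfolding m_def by (rule not_less_Least)
  define a where "a = (i + n - m) mod n"
  have shift: "(a + t) mod n = (i + n - (m - t)) mod n" if "t \<le> m" for t
  proof -
    have "(a + t) mod n = (i + n - m + t) mod n" by (simp add: a_def mod_add_left_eq)
    also have "i + n - m + t = i + n - (m - t)" using m(2) that by simp
    finally show ?thesis .
  qed
  have a_m: "(a + m) mod n = i" using shift[of m] i_lt by simp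
  have gap: "(a + t) mod n \<notin> J" if "1 \<le> t" "t \<le> m" for t
  proof (cases "t = m")
    case True
    then show ?thesis using a_m i_notin by simp
  next
    case False
    then have "m - t \<notin> K" using m_min[of "m - t"] that by simp
    then show ?thesis using shift[OF that(2)] that m(2) False by (simp add: K_def)
  qed
  define H where "H = {(a + t) mod n | t. 1 \<le> t \<and> t \<le> m}"
  have "(a + m + 1) mod n = (i + 1) mod n" using a_m by (metis mod_Suc_eq add.commute plus_1_eq_Suc)
  then have "1 \<le> m \<and> a \<in> J \<and> H = {(a + t) mod n | t. 1 \<le> t \<and> t \<le> m} \<and>
      H \<inter> J = {} \<and> (a + m + 1) mod n \<in> J"
    using m(1,3) gap Suc_i unfolding H_def a_def by auto
  then have "H \<in> holes n J"
    unfolding holes_def by blast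
  moreover have "i \<in> H" unfolding H_def using a_m m(1,2) by auto
  moreover have "i' = i" if "i' \<in> entry_boundary n J" "i' \<in> H" for i'
  proof -
    from that(2) obtain t where t: "1 \<le> t" "t \<le> m" "i' = (a + t) mod n"
      by (auto simp: H_def)
    have "(i' + 1) mod n = (a + (t + 1)) mod n" using t(3) by (simp add: mod_Suc_eq)
    then have "\<not> t < m" using gap[of "t + 1"] that(1) by (auto simp: entry_boundary_def)
    then show ?thesis using t a_m by simp
  qed
  ultimately show ?thesis by blast
qed

lemma card_entry_boundary_le_card_holes:
  assumes "0 < n"
  shows "card (entry_boundary n J) \<le> card (holes n J)"
proof -
  have "\<forall>i\<in>entry_boundary n J. \<exists>H. H \<in> holes n J \<and> i \<in> H \<and> entry_boundary n J \<inter> H \<subseteq> {i}"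
    using hole_ending_at by blast
  then obtain f where f: "\<forall>i\<in>entry_boundary n J.
      f i \<in> holes n J \<and> i \<in> f i \<and> entry_boundary n J \<inter> f i \<subseteq> {i}"
    by (rule bchoice[THEN exE]) blast
  have inj: "inj_on f (entry_boundary n J)"
  proof (rule inj_onI)
    fix x y assume xy: "x \<in> entry_boundary n J" "y \<in> entry_boundary n J" "f x = f y"
    then have "y \<in> entry_boundary n J \<inter> f x" using f by simp
    then show "x = y" using f xy(1) by blast
  qed
  have "H \<subseteq> {..<n}" if "H \<in> holes n J" for H
  proof -
    from that obtain a h where "H = {(a + t) mod n | t. 1 \<le> t \<and> t \<le> h}"
      unfolding holes_def by blast
    then show ?thesis using assms by auto
  qed
  then have fin: "finite (holes n J)"
    by (meson Pow_iff finite_Pow_iff finite_lessThan finite_subset subsetI)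
  show ?thesis
    by (rule card_inj_on_le[OF inj _ fin]) (use f in auto)
qed

lemma successive_card_entry_boundary:
  "0 < n \<Longrightarrow> successive n J \<Longrightarrow> card (entry_boundary n J) \<le> 1"
  using card_entry_boundary_le_card_holes[of n J] by (simp add: successive_def)

lemma bsupp_1_nonempty:
  assumes "x \<in> vec_space n" "x \<noteq> (\<lambda>i. 0)"
  shows "bsupp n 1 x \<noteq> {}"
proof -
  obtain i where i: "x i \<noteq> 0" using assms(2) by fastforce
  have "\<forall>j\<ge>n. x j = 0" using assms(1) by (simp add: vec_space_def)
  then have "i < n" using i not_le by blast
  then have "i \<in> bsupp n 1 x" using i by (simp add: bsupp_def)
  then show ?thesis by blast
qed

lemma finite_bweights: "finite {bweight n b c | c. c \<in> C \<and> c \<noteq> (\<lambda>i. 0)}"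
  by (rule finite_subset[of _ "{..n}"]) (auto simp: bweight_le)

lemma bdist_le_bweight: "c \<in> C \<Longrightarrow> c \<noteq> (\<lambda>i. 0) \<Longrightarrow> bdist n b C \<le> bweight n b c"
  unfolding bdist_def by (rule Min_le[OF finite_bweights]) blast

lemma le_bdist:
  assumes "\<exists>c\<in>C. c \<noteq> (\<lambda>i. 0)"
    and "\<And>c. c \<in> C \<Longrightarrow> c \<noteq> (\<lambda>i. 0) \<Longrightarrow> w \<le> bweight n b c"
  shows "w \<le> bdist n b C"
  unfolding bdist_def using assms by (intro Min.boundedI[OF finite_bweights]) auto

lemma bdist_1_pos:
  assumes "C \<subseteq> vec_space n" "\<exists>c\<in>C. c \<noteq> (\<lambda>i. 0)"
  shows "0 < bdist n 1 C"
proof -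
  have "1 \<le> bweight n 1 c" if "c \<in> C" "c \<noteq> (\<lambda>i. 0)" for c
    using bsupp_1_nonempty[of c n] assms(1) that
    by (auto simp: bweight_def Suc_le_eq card_gt_0_iff)
  then have "1 \<le> bdist n 1 C" by (rule le_bdist[OF assms(2)])
  then show ?thesis by simp
qed

theorem mainTheorem1:
  fixes C :: "(nat \<Rightarrow> 'a::{finite,field}) set" and n :: nat
  assumes "n \<ge> 1"
    and "linear_code n C"
    and "\<exists>c\<in>C. c \<noteq> (\<lambda>i. 0)"
    and "\<exists>c\<in>C. bweight n 1 c = bdist n 1 C \<and> successive n (bsupp n 1 c)"
  shows "\<forall>b. 1 \<le> b \<and> b \<le> n \<longrightarrow> bdist n b C = min (bdist n 1 C + b - 1) n"
proof (intro allI impI)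
  fix b assume b: "1 \<le> b \<and> b \<le> n"
  define d where "d = bdist n 1 C"
  have C: "C \<subseteq> vec_space n" using assms(2) by (simp add: linear_code_def)
  obtain c0 where c0: "c0 \<in> C" "bweight n 1 c0 = d" "successive n (bsupp n 1 c0)"
    using assms(4) d_def by blast
  have "c0 \<noteq> (\<lambda>i. 0)"
    using c0(2) bdist_1_pos[OF C assms(3)] by (auto simp: d_def bweight_def bsupp_def)
  then have "bdist n b C \<le> bweight n b c0"
    by (rule bdist_le_bweight[OF c0(1)])
  moreover have "(b - 1) * card (entry_boundary n (bsupp n 1 c0)) \<le> b - 1"
    using successive_card_entry_boundary[OF _ c0(3)] assms(1) by simp
  then have "bweight n b c0 \<le> d + b - 1"
    using card_bsupp_le[of b n c0] b c0(2) unfolding bweight_def by linarith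
  ultimately have "bdist n b C \<le> min (d + b - 1) n"
    using bweight_le[of n b c0] by simp
  moreover have "min (d + b - 1) n \<le> bdist n b C"
  proof (rule le_bdist[OF assms(3)])
    fix c assume "c \<in> C" "c \<noteq> (\<lambda>i. 0)"
    then show "min (d + b - 1) n \<le> bweight n b c"
      using card_bsupp_ge[OF bsupp_1_nonempty, of c n b] bdist_le_bweight[of c C n 1] C b
      unfolding d_def bweight_def by fastforce
  qed
  ultimately have "bdist n b C = min (d + b - 1) n"
    by (rule antisym)
  then show "bdist n b C = min (bdist n 1 C + b - 1) n"
    by (simp only: d_def)
qed

end
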